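(* Let $\mu, \nu$ be compactly supported probability measures on $\mathbb{R}$, with $\mu$ not a point mass, and let $p, q$ be real polynomials, not both zero. Suppose the operator $Q = p(x) L_\nu L_\mu + q(x) L_\mu$ on $\mathbb{R}[x]$ has a polynomial system of eigenfunctions $\{P_n\}_{n\ge0}$ which is orthogonal with respect to $\mu$, i.e. $\int P_nP_m\,d\mu = 0$ for $n\neq m$. Then $\mu = \Phi_{\beta,\gamma}[\nu]$ for some $\beta \in \mathbb{R}$ and $\gamma > 0$.
   Context: $L_\mu[f](x) = \int \frac{f(x)-f(y)}{x-y}\,d\mu(y)$ on polynomials, similarly $L_\nu$. A polynomial system is a family $\{P_n\}_{n\ge0}$ with $\deg P_n=n$; it is a system of eigenfunctions of $Q$ if $Q[P_n]=\lambda_nP_n$ for some $\lambda_n\in\mathbb{R}$, for all $n$. For a probability measure $\nu$, $\beta\in\mathbb{R}$, $\gamma>0$, $\Phi_{\beta,\gamma}[\nu]$ is the probability measure $\mu$ with Cauchy transform $G_\mu(z) = 1/(z-\beta-\gamma G_\nu(z))$, where $G_\mu(z)=\int\frac{d\mu(x)}{z-x}$; equivalently it prepends $\beta$ and $\gamma$ to the Jacobi parameter sequences of $\nu$. *)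

theory Defs
  imports "HOL-Probability.Probability" "HOL-Computational_Algebra.Polynomial"
begin

definition moment :: "real measure \<Rightarrow> nat \<Rightarrow> real" where
  "moment M i = (\<integral>y. y ^ i \<partial>M)"

text \<open>The operator L_mu on polynomials:
  L_mu[f](x) = integral of (f(x)-f(y))/(x-y) dmu(y).
  Since (f(x)-f(y))/(x-y) = sum_k c_k sum_{j<k} x^j y^(k-1-j) for f = sum_k c_k x^k,
  integrating in y gives the polynomial below.\<close>
definition Lop :: "real measure \<Rightarrow> real poly \<Rightarrow> real poly" where
  "Lop M f = (\<Sum>k\<le>degree f. smult (coeff f k)
                 (\<Sum>j<k. monom (moment M (k - 1 - j)) j))"

definition cauchy_transform :: "real measure \<Rightarrow> complex \<Rightarrow> complex" where
  "cauchy_transform M z = (\<integral>x. 1 / (z - complex_of_real x) \<partial>M)"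

text \<open>mu = Phi_{beta,gamma}[nu]: G_mu(z) = 1/(z - beta - gamma G_nu(z)) off the real axis.\<close>
definition is_Phi :: "real \<Rightarrow> real \<Rightarrow> real measure \<Rightarrow> real measure \<Rightarrow> bool" where
  "is_Phi \<beta> \<gamma> N M \<longleftrightarrow>
     (\<forall>z. Im z \<noteq> 0 \<longrightarrow>
        cauchy_transform M z = 1 / (z - complex_of_real \<beta> - complex_of_real \<gamma> * cauchy_transform N z))"

definition compactly_supported :: "real measure \<Rightarrow> bool" where
  "compactly_supported M \<longleftrightarrow> (\<exists>K. compact K \<and> K \<in> sets M \<and> emeasure M (space M - K) = 0)"

end

theory Submission
  imports Defs
begin

(* Proof of Proposition 4.6.  Write m_k, n_k for the moments of mu and nu, and
   gamma = m_2 - m_1^2 for the variance of mu.  The proof has an algebraic and an analytic half.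

   Since Q has an orthogonal polynomial system of eigenfunctions, it is
   self-adjoint for the functional f |-> integral of f dmu.  Testing this against 1, x, x^2
   and comparing top coefficients of the eigenvalue equations for P_1, ..., P_4 yields the
   moment identity
       integral (x - m_1) f(x) dmu = gamma * integral (L_mu f) dnu     for all polynomials f,
   where in the degenerate case q = 0 one finds that nu is a point mass.

   For non-real z the Cauchy kernel 1/(z - x) is approximated on the
   (compact) supports by polynomials whose divided differences also converge boundedly;
   bounded convergence turns the moment identity into (z - m_1) G_mu - 1 = gamma G_mu G_nu,
   i.e. G_mu = 1 / (z - m_1 - gamma G_nu), so mu = Phi_{m_1, gamma}[nu] with gamma > 0
   because mu is not a point mass. *)

section \<open>Moment sequences acting on polynomials\<close>

text \<open>Everything about polynomials in the algebraic part depends on a measure only through its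
  moment sequence \<open>m\<close>.\<close>

definition Lseq :: "(nat \<Rightarrow> 'a::comm_ring_1) \<Rightarrow> 'a poly \<Rightarrow> 'a poly" where
  "Lseq m f = (\<Sum>k\<le>degree f. smult (coeff f k) (\<Sum>j<k. monom (m (k - 1 - j)) j))"

definition Eseq :: "(nat \<Rightarrow> 'a::comm_ring_1) \<Rightarrow> 'a poly \<Rightarrow> 'a" where
  "Eseq m f = (\<Sum>k\<le>degree f. coeff f k * m k)"

lemma Lop_eq_Lseq: "Lop M f = Lseq (moment M) f"
  unfolding Lop_def Lseq_def ..

lemma sum_coeff_beyond_degree:
  fixes f :: "'a::comm_ring_1 poly"
  assumes "degree f \<le> n"
  shows "(\<Sum>k\<le>n. coeff f k * h k) = (\<Sum>k\<le>degree f. coeff f k * h k)"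
  using assms by (intro sum.mono_neutral_right) (auto intro!: le_degree)

lemma coeff_Lseq:
  assumes "degree f \<le> n"
  shows "coeff (Lseq m f) i = (\<Sum>k\<le>n. coeff f k * (if i < k then m (k - 1 - i) else 0))"
proof -
  have "coeff (Lseq m f) i = (\<Sum>k\<le>degree f. coeff f k * (if i < k then m (k - 1 - i) else 0))"
    unfolding Lseq_def coeff_sum coeff_smult coeff_monom
    by (intro sum.cong refl) (auto simp: sum.delta[where S="{..<_}"] if_distrib cong: if_cong)
  then show ?thesis
    using sum_coeff_beyond_degree[OF assms] by metis
qed

lemma Eseq_upto: "degree f \<le> n \<Longrightarrow> Eseq m f = (\<Sum>k\<le>n. coeff f k * m k)"
  unfolding Eseq_def using sum_coeff_beyond_degree by metis

lemma Lseq_add: "Lseq m (f + g) = Lseq m f + Lseq m g"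
proof (rule poly_eqI)
  fix i
  let ?n = "max (degree f) (degree g)"
  have "degree (f + g) \<le> ?n" by (simp add: degree_add_le)
  then show "coeff (Lseq m (f + g)) i = coeff (Lseq m f + Lseq m g) i"
    by (simp add: coeff_Lseq[of _ ?n] distrib_right sum.distrib)
qed

lemma Lseq_smult: "Lseq m (smult c f) = smult c (Lseq m f)"
proof (rule poly_eqI)
  fix i
  have "degree (smult c f) \<le> degree f" by (simp add: degree_smult_le)
  then show "coeff (Lseq m (smult c f)) i = coeff (smult c (Lseq m f)) i"
    by (simp add: coeff_Lseq[of _ "degree f"] sum_distrib_left mult_ac)
qed

lemma Lseq_const [simp]: "Lseq m [:c:] = 0"
  unfolding Lseq_def by simp

lemma Lseq_0 [simp]: "Lseq m 0 = 0"
  unfolding Lseq_def by simp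

lemma Lseq_sum: "Lseq m (\<Sum>i\<in>A. f i) = (\<Sum>i\<in>A. Lseq m (f i))"
  by (induction A rule: infinite_finite_induct) (auto simp: Lseq_add)

lemma Eseq_add: "Eseq m (f + g) = Eseq m f + Eseq m g"
proof -
  let ?n = "max (degree f) (degree g)"
  have "degree (f + g) \<le> ?n" by (simp add: degree_add_le)
  then show ?thesis by (simp add: Eseq_upto[of _ ?n] distrib_right sum.distrib)
qed

lemma Eseq_smult: "Eseq m (smult c f) = c * Eseq m f"
  using degree_smult_le[of c f]
  by (simp add: Eseq_upto[of "smult c f" "degree f"]) (simp add: Eseq_def sum_distrib_left mult_ac)

lemma Eseq_0 [simp]: "Eseq m 0 = 0"
  unfolding Eseq_def by simp

lemma Eseq_const: "Eseq m [:c:] = c * m 0"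
  by (simp add: Eseq_def)

text \<open>The two recursions that make both objects computable by simplification: multiplying
  by \<open>x\<close> shifts the moment sequence, and \<open>L\<close> of \<open>a + x f\<close> is \<open>x L f\<close> plus the constant \<open>E f\<close>.\<close>
lemma Eseq_pCons: "Eseq m (pCons a f) = a * m 0 + Eseq (\<lambda>k. m (Suc k)) f"
proof -
  have "degree (pCons a f) \<le> Suc (degree f)" by (simp add: degree_pCons_le)
  then have "Eseq m (pCons a f) = (\<Sum>k\<le>Suc (degree f). coeff (pCons a f) k * m k)"
    by (rule Eseq_upto)
  also have "\<dots> = a * m 0 + Eseq (\<lambda>k. m (Suc k)) f"
    by (simp add: sum.atMost_Suc_shift Eseq_def del: sum.atMost_Suc)
  finally show ?thesis .
qed

lemma Lseq_pCons: "Lseq m (pCons a f) = pCons 0 (Lseq m f) + [:Eseq m f:]"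
proof (rule poly_eqI)
  fix i
  have d: "degree (pCons a f) \<le> Suc (degree f)" by (simp add: degree_pCons_le)
  show "coeff (Lseq m (pCons a f)) i = coeff (pCons 0 (Lseq m f) + [:Eseq m f:]) i"
  proof (cases i)
    case 0
    then show ?thesis
      by (simp add: coeff_Lseq[OF d] sum.atMost_Suc_shift Eseq_def del: sum.atMost_Suc)
  next
    case (Suc i')
    then show ?thesis
      by (simp add: coeff_Lseq[OF d] coeff_Lseq[of f "degree f"] sum.atMost_Suc_shift
          del: sum.atMost_Suc, intro sum.cong, auto)
  qed
qed

lemma Eseq_powers: "Eseq (\<lambda>k. t ^ k) f = poly f t"
  unfolding Eseq_def by (simp add: poly_altdef)

lemma poly_Lseq:
  "poly (Lseq m f) s = (\<Sum>k\<le>degree f. coeff f k * (\<Sum>j<k. m (k - 1 - j) * s ^ j))"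
  unfolding Lseq_def by (simp add: poly_sum poly_monom)

lemma poly_coeffs_deg1: "degree (f::'a::zero poly) \<le> 1 \<Longrightarrow> f = [:coeff f 0, coeff f 1:]"
  by (rule poly_eqI) (auto simp: coeff_pCons coeff_eq_0 eval_nat_numeral split: nat.split)

lemma poly_coeffs_deg2:
  "degree (f::'a::zero poly) \<le> 2 \<Longrightarrow> f = [:coeff f 0, coeff f 1, coeff f 2:]"
  by (rule poly_eqI) (auto simp: coeff_pCons coeff_eq_0 eval_nat_numeral split: nat.split)

lemma poly_coeffs_deg3:
  "degree (f::'a::zero poly) \<le> 3 \<Longrightarrow> f = [:coeff f 0, coeff f 1, coeff f 2, coeff f 3:]"
  by (rule poly_eqI) (auto simp: coeff_pCons coeff_eq_0 eval_nat_numeral split: nat.split)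

lemma poly_coeffs_deg4:
  "degree (f::'a::zero poly) \<le> 4 \<Longrightarrow> f = [:coeff f 0, coeff f 1, coeff f 2, coeff f 3, coeff f 4:]"
  by (rule poly_eqI) (auto simp: coeff_pCons coeff_eq_0 eval_nat_numeral split: nat.split)

lemma polynomial_system_induct:
  fixes P :: "nat \<Rightarrow> 'a::field poly"
  assumes deg: "\<forall>k. P k \<noteq> 0 \<and> degree (P k) = k"
    and SP: "\<And>k. S (P k)"
    and Sadd: "\<And>f g. S f \<Longrightarrow> S g \<Longrightarrow> S (f + g)"
    and Ssmult: "\<And>c f. S f \<Longrightarrow> S (smult c f)"
  shows "S f"
proof -
  have "\<forall>f. degree f \<le> n \<longrightarrow> S f" for n
  proof (induction n)
    case 0
    show ?case
    proof (intro allI impI)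
      fix f :: "'a poly" assume "degree f \<le> 0"
      then have f: "f = [:coeff f 0:]" by (metis degree_0_id le_zero_eq)
      obtain d where d: "P 0 = [:d:]" "d \<noteq> 0"
        using deg by (metis degree_0_id pCons_0_0)
      have "f = smult (coeff f 0 / d) (P 0)"
        using d by (subst f) simp
      then show "S f" using Ssmult SP by metis
    qed
  next
    case (Suc n)
    show ?case
    proof (intro allI impI)
      fix f :: "'a poly" assume df: "degree f \<le> Suc n"
      define c where "c = coeff f (Suc n) / lead_coeff (P (Suc n))"
      define r where "r = f - smult c (P (Suc n))"
      have "lead_coeff (P (Suc n)) \<noteq> 0" using deg by (metis leading_coeff_0_iff)
      then have "coeff r (Suc n) = 0" unfolding r_def c_def using deg by simp
      moreover have "degree r \<le> Suc n" unfolding r_def using deg df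
        by (metis degree_diff_le degree_smult_le order_trans)
      ultimately have "degree r \<le> n"
        by (metis le_SucE leading_coeff_0_iff degree_0 zero_le)
      then have "S r" using Suc.IH by blast
      moreover have "f = r + smult c (P (Suc n))" unfolding r_def by simp
      ultimately show "S f" using Sadd SP Ssmult by metis
    qed
  qed
  then show ?thesis by blast
qed
section \<open>The algebraic core\<close>

definition Qop :: "(nat \<Rightarrow> 'a::comm_ring_1) \<Rightarrow> (nat \<Rightarrow> 'a) \<Rightarrow> 'a poly \<Rightarrow> 'a poly \<Rightarrow> 'a poly \<Rightarrow> 'a poly"
  where "Qop mm nn p q f = p * Lseq nn (Lseq mm f) + q * Lseq mm f"

lemma Qop_add: "Qop mm nn p q (f + g) = Qop mm nn p q f + Qop mm nn p q g"
  unfolding Qop_def by (simp add: Lseq_add algebra_simps)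

lemma Qop_smult: "Qop mm nn p q (smult c f) = smult c (Qop mm nn p q f)"
  unfolding Qop_def by (simp add: Lseq_smult algebra_simps smult_add_right)

lemma Qop_const: "Qop mm nn p q [:c:] = 0"
  unfolding Qop_def by simp

text \<open>How \<open>Q\<close> interacts with multiplication by \<open>x\<close>; together with \<open>Q 1 = 0\<close> this is what turns
  self-adjointness of \<open>Q\<close> into moment identities.\<close>
lemma Qop_pCons0:
  "Qop mm nn p q (pCons 0 f) =
     pCons 0 (Qop mm nn p q f) + smult (Eseq nn (Lseq mm f)) p + smult (Eseq mm f) q"
  unfolding Qop_def by (simp add: Lseq_pCons Lseq_add algebra_simps)

text \<open>Applied to \<open>P 1\<close> and \<open>P 2\<close> this bounds the degrees of \<open>q\<close> and \<open>p\<close>.\<close>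
lemma Qop_linear: "Qop mm nn p q [:a, b:] = smult (b * mm 0) q"
  unfolding Qop_def by (simp add: Lseq_pCons Eseq_pCons Eseq_const)

lemma Qop_quadratic: "Qop mm nn p 0 [:a, b, c:] = smult (c * mm 0 * nn 0) p"
  unfolding Qop_def by (simp add: Lseq_pCons Eseq_pCons Eseq_const mult_ac)

lemma degree_le_of_eigen:
  fixes r :: "'a::field poly"
  assumes "smult b r = smult c f" "b \<noteq> 0"
  shows "degree r \<le> degree f"
proof -
  have "r = smult (inverse b) (smult b r)" using assms(2) by simp
  then have "r = smult (inverse b * c) f" using assms(1) by simp
  then show ?thesis by (metis degree_smult_le)
qed

lemma Qop_selfadjoint:
  fixes P :: "nat \<Rightarrow> 'a::field poly"
  assumes deg: "\<forall>k. P k \<noteq> 0 \<and> degree (P k) = k"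
    and eig: "\<forall>k. Qop mm nn p q (P k) = smult (c k) (P k)"
    and orth: "\<forall>k j. k \<noteq> j \<longrightarrow> Eseq mm (P k * P j) = 0"
  shows "Eseq mm (g * Qop mm nn p q f) = Eseq mm (f * Qop mm nn p q g)"
proof -
  let ?Q = "Qop mm nn p q"
  let ?S = "\<lambda>g f. Eseq mm (g * ?Q f) = Eseq mm (f * ?Q g)"
  have on_system: "?S (P j) (P k)" for j k
    using orth eig by (cases "k = j") (simp_all add: Eseq_smult mult.commute)
  have add_right: "?S g (f + h)" if "?S g f" "?S g h" for g f h
    using that by (simp add: Qop_add distrib_left distrib_right Eseq_add)
  have smult_right: "?S g (smult a f)" if "?S g f" for g f a
    using that by (simp add: Qop_smult Eseq_smult)
  have add_left: "?S (g + h) f" if "?S g f" "?S h f" for g h f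
    using that by (simp add: Qop_add distrib_left distrib_right Eseq_add)
  have smult_left: "?S (smult a g) f" if "?S g f" for g f a
    using that by (simp add: Qop_smult Eseq_smult)
  have "?S (P k) f" for k f
    using on_system add_right smult_right by (rule polynomial_system_induct[OF deg])
  then show ?thesis
    using add_left smult_left by (rule polynomial_system_induct[OF deg])
qed

text \<open>The two consequences of self-adjointness obtained by testing against \<open>1\<close> and \<open>x\<close>
  (and \<open>Q 1 = 0\<close>, \<open>Q x = q\<close>): \<open>q\<close> is orthogonal to constants, and the basic relation between
  \<open>q\<close>, the mass of \<open>p\<close> and the functional \<open>f \<mapsto> \<integral> L\<^sub>\<mu> f d\<nu>\<close>.\<close>
lemma selfadjoint_identities:
  fixes mm nn :: "nat \<Rightarrow> 'a::field"
  assumes m0: "mm 0 = 1"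
    and sym: "\<And>f g. Eseq mm (g * Qop mm nn p q f) = Eseq mm (f * Qop mm nn p q g)"
  shows "Eseq mm q = 0"
    and "Eseq mm (f * q) + Eseq mm p * Eseq nn (Lseq mm f) = 0"
proof -
  let ?Q = "Qop mm nn p q"
  have Q1: "?Q 1 = 0" by (metis Qop_const one_pCons)
  have Qx: "?Q [:0, 1:] = q" using m0 by (simp add: Qop_linear)
  have mean_zero: "Eseq mm (?Q f) = 0" for f
    using sym[of f 1] Q1 by simp
  have first_moment: "Eseq mm (pCons 0 (?Q f)) = Eseq mm (f * q)" for f
    using sym[of f "[:0, 1:]"] Qx by simp
  show Eq: "Eseq mm q = 0"
    using mean_zero[of "[:0, 1:]"] Qx by simp
  show "Eseq mm (f * q) + Eseq mm p * Eseq nn (Lseq mm f) = 0"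
    using mean_zero[of "pCons 0 f"]
    by (simp add: Qop_pCons0 Eseq_add Eseq_smult first_moment Eq mult.commute)
qed

lemma degenerate_annihilation:
  fixes mm nn :: "nat \<Rightarrow> 'a::field_char_0"
  assumes m0: "mm 0 = 1" and n0: "nn 0 = 1"
    and sym: "\<And>f g. Eseq mm (g * Qop mm nn p 0 f) = Eseq mm (f * Qop mm nn p 0 g)"
    and Ep: "Eseq mm p = 0"
  shows "Eseq mm (f * p) = 0"
proof -
  let ?Q = "Qop mm nn p 0"
  have Qxx: "?Q [:0, 0, 1:] = p" using m0 n0 by (simp add: Qop_quadratic)
  have Q1: "?Q 1 = 0" by (metis Qop_const one_pCons)
  have mean_zero: "Eseq mm (?Q f) = 0" for f
    using sym[of f 1] Q1 by simp
  have x_mean: "Eseq nn (Lseq mm [:0, 1:]) = 1"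
    using m0 n0 by (simp add: Lseq_pCons Eseq_pCons Eseq_const)
  have shift2: "Eseq mm (pCons 0 (pCons 0 (?Q f))) = Eseq mm (f * p)" for f
    using sym[of f "[:0, 0, 1:]"] Qxx by simp
  have shift_add: "pCons 0 (g + h) = pCons 0 g + pCons 0 h" for g h :: "'a poly" by simp
  have shift_smult: "pCons 0 (smult a g) = smult a (pCons 0 g)" for a and g :: "'a poly" by simp
  have relation: "Eseq mm (f * p) + Eseq nn (Lseq mm f) * Eseq mm (pCons 0 p) = 0" for f
  proof -
    have "0 = Eseq mm (?Q (pCons 0 (pCons 0 f)))" using mean_zero by simp
    also have "\<dots> = Eseq mm (f * p) + Eseq nn (Lseq mm f) * Eseq mm (pCons 0 p)
        + Eseq nn (Lseq mm (pCons 0 f)) * Eseq mm p"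
      unfolding Qop_pCons0
      by (simp only: shift_add shift_smult smult_0_right add_0_right Eseq_add Eseq_smult shift2)
    finally show ?thesis using Ep by simp
  qed
  have "Eseq mm (pCons 0 p) = 0"
    using relation[of "[:0, 1:]"] x_mean by (simp add: Ep)
  then show ?thesis using relation[of f] by simp
qed

text \<open>Comparing top coefficients in \<open>p L\<^sub>\<nu> L\<^sub>\<mu> P = c P\<close> for \<open>P\<close> of degree 3 and 4
  (when \<open>q = 0\<close> and \<open>p = a\<^sub>0 + a\<^sub>1 x + a\<^sub>2 x\<^sup>2\<close>): the first gives a linear relation between the
  first moments, the second then forces \<open>\<nu>\<close> to have variance zero.\<close>
lemma eigen_cubic_relation:
  fixes mm nn :: "nat \<Rightarrow> 'a::field"
  assumes m0: "mm 0 = 1" and n0: "nn 0 = 1"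
    and eig: "Qop mm nn [:a0, a1, a2:] 0 P = smult c P" and deg: "degree P = 3"
  shows "a1 + a2 * mm 1 + a2 * nn 1 = 0"
proof -
  define b0 b1 b2 b3 where "b0 = coeff P 0" "b1 = coeff P 1" "b2 = coeff P 2" "b3 = coeff P 3"
  have P: "P = [:b0, b1, b2, b3:]"
    using deg poly_coeffs_deg3[of P] b0_b1_b2_b3_def by simp
  have b3: "b3 \<noteq> 0"
    using deg b0_b1_b2_b3_def by (metis leading_coeff_0_iff zero_neq_numeral degree_0)
  have eq: "Qop mm nn [:a0, a1, a2:] 0 [:b0, b1, b2, b3:] = smult c [:b0, b1, b2, b3:]"
    using eig P by simp
  have "a2 * b3 = c * b3"
    using arg_cong[OF eq, of "\<lambda>r. coeff r 3"] m0 n0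
    by (simp add: Qop_def Lseq_pCons Eseq_pCons Eseq_const eval_nat_numeral)
  then have c: "c = a2" using b3 by simp
  have "a1 * b3 + a2 * (b2 + b3 * mm 1 + b3 * nn 1) = c * b2"
    using arg_cong[OF eq, of "\<lambda>r. coeff r 2"] m0 n0
    by (simp add: Qop_def Lseq_pCons Eseq_pCons Eseq_const eval_nat_numeral algebra_simps)
  then have "b3 * (a1 + a2 * mm 1 + a2 * nn 1) = 0"
    unfolding c by (simp add: algebra_simps)
  then show ?thesis using b3 by simp
qed

lemma eigen_quartic_variance:
  fixes mm nn :: "nat \<Rightarrow> 'a::field"
  assumes m0: "mm 0 = 1" and n0: "nn 0 = 1" and a2: "a2 \<noteq> 0"
    and mass: "a0 + a1 * mm 1 + a2 * mm 2 = 0"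
    and rel: "a1 + a2 * mm 1 + a2 * nn 1 = 0"
    and eig: "Qop mm nn [:a0, a1, a2:] 0 P = smult c P" and deg: "degree P = 4"
  shows "nn 2 = nn 1 ^ 2"
proof -
  define b0 b1 b2 b3 b4
    where "b0 = coeff P 0" "b1 = coeff P 1" "b2 = coeff P 2" "b3 = coeff P 3" "b4 = coeff P 4"
  have P: "P = [:b0, b1, b2, b3, b4:]"
    using deg poly_coeffs_deg4[of P] b0_b1_b2_b3_b4_def by simp
  have b4: "b4 \<noteq> 0"
    using deg b0_b1_b2_b3_b4_def by (metis leading_coeff_0_iff zero_neq_numeral degree_0)
  have eq: "Qop mm nn [:a0, a1, a2:] 0 [:b0, b1, b2, b3, b4:] = smult c [:b0, b1, b2, b3, b4:]"
    using eig P by simp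
  have "a2 * b4 = c * b4"
    using arg_cong[OF eq, of "\<lambda>r. coeff r 4"] m0 n0
    by (simp add: Qop_def Lseq_pCons Eseq_pCons Eseq_const eval_nat_numeral)
  then have c: "c = a2" using b4 by simp
  have coeff2: "a0 * b4 + a1 * (b3 + b4 * mm 1 + b4 * nn 1)
      + a2 * (b2 + b3 * mm 1 + b4 * mm 2 + (b3 + b4 * mm 1) * nn 1 + b4 * nn 2) = c * b2"
    using arg_cong[OF eq, of "\<lambda>r. coeff r 2"] m0 n0
    by (simp add: Qop_def Lseq_pCons Eseq_pCons Eseq_const eval_nat_numeral algebra_simps)
  have "b4 * (a2 * (nn 2 - nn 1 ^ 2)) =
      (a0 * b4 + a1 * (b3 + b4 * mm 1 + b4 * nn 1)
        + a2 * (b2 + b3 * mm 1 + b4 * mm 2 + (b3 + b4 * mm 1) * nn 1 + b4 * nn 2) - a2 * b2)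
      - b3 * (a1 + a2 * mm 1 + a2 * nn 1) - b4 * (a0 + a1 * mm 1 + a2 * mm 2)
      - b4 * nn 1 * (a1 + a2 * mm 1 + a2 * nn 1)"
    by (simp add: algebra_simps power2_eq_square)
  also have "\<dots> = 0" using coeff2 c rel mass by simp
  finally show ?thesis using a2 b4 by simp
qed

text \<open>If \<open>p\<close> (of degree two) annihilates everything and \<open>L\<^sub>\<mu> p\<close> vanishes at \<open>s\<close>, then
  \<open>\<integral> (x - m\<^sub>1) f d\<mu> = \<gamma> (L\<^sub>\<mu> f)(s)\<close>: both sides vanish on multiples of \<open>p\<close> and agree on
  the remainders of degree at most one.\<close>
lemma identity_modulo_annihilator:
  fixes mm :: "nat \<Rightarrow> 'a::field"
  assumes m0: "mm 0 = 1"
    and annih: "\<And>g. Eseq mm (g * p) = 0" and degp: "degree p = 2"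
    and root: "poly (Lseq mm p) s = 0"
  shows "Eseq mm (f * [:- mm 1, 1:]) = (mm 2 - mm 1 ^ 2) * poly (Lseq mm f) s"
proof -
  have L_multiple: "Lseq mm (g * p) = g * Lseq mm p" for g
  proof (induction g)
    case (pCons a g)
    have "Lseq mm (pCons a g * p) = Lseq mm (smult a p + pCons 0 (g * p))" by simp
    also have "\<dots> = smult a (Lseq mm p) + pCons 0 (Lseq mm (g * p))"
      by (simp add: Lseq_add Lseq_smult Lseq_pCons annih)
    finally show ?case using pCons.IH by simp
  qed simp
  define g r where "g = f div p" "r = f mod p"
  have f: "f = g * p + r" unfolding g_r_def by simp
  have "p \<noteq> 0" using degp by auto
  then have "degree r \<le> 1"
    using degree_mod_less'[of p f] degp unfolding g_r_def by (cases "f mod p = 0") auto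
  then obtain r0 r1 where r: "r = [:r0, r1:]" by (metis poly_coeffs_deg1)
  have "Eseq mm (f * [:- mm 1, 1:]) = Eseq mm (g * [:- mm 1, 1:] * p) + Eseq mm (r * [:- mm 1, 1:])"
    unfolding f by (simp only: distrib_right Eseq_add mult.assoc mult.commute[of p])
  also have "\<dots> = Eseq mm (r * [:- mm 1, 1:])"
    by (simp only: annih add_0_left)
  also have "\<dots> = (mm 2 - mm 1 ^ 2) * r1"
    using m0 by (simp add: r Eseq_pCons Eseq_const numeral_2_eq_2 algebra_simps power2_eq_square)
  also have "r1 = poly (Lseq mm f) s"
    using m0 unfolding f by (simp add: Lseq_add L_multiple root r Lseq_pCons Eseq_const)
  finally show ?thesis .
qed

text \<open>The degenerate case \<open>q = 0\<close> (forced when \<open>p\<close> has mass zero): the eigenvalue equations for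
  \<open>P 2, P 3, P 4\<close> show that \<open>p\<close> is a quadratic annihilating all polynomials, that \<open>\<nu>\<close> has
  variance zero, and that \<open>L\<^sub>\<mu> p\<close> vanishes at the mean \<open>nn 1\<close> of \<open>\<nu>\<close>.\<close>
lemma moment_identity_degenerate:
  fixes mm nn :: "nat \<Rightarrow> 'a::field_char_0" and P :: "nat \<Rightarrow> 'a poly"
  assumes m0: "mm 0 = 1" and n0: "nn 0 = 1"
    and deg: "\<forall>k. P k \<noteq> 0 \<and> degree (P k) = k"
    and eig: "\<forall>k. Qop mm nn p 0 (P k) = smult (c k) (P k)"
    and sym: "\<And>f g. Eseq mm (g * Qop mm nn p 0 f) = Eseq mm (f * Qop mm nn p 0 g)"
    and p0: "p \<noteq> 0" and Ep: "Eseq mm p = 0" and var: "mm 2 - mm 1 ^ 2 \<noteq> 0"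
  shows "nn 2 = nn 1 ^ 2"
    and "Eseq mm (f * [:- mm 1, 1:]) = (mm 2 - mm 1 ^ 2) * poly (Lseq mm f) (nn 1)"
proof -
  have annih: "Eseq mm (g * p) = 0" for g
    by (rule degenerate_annihilation[OF m0 n0 sym Ep])
  have P2: "P 2 = [:coeff (P 2) 0, coeff (P 2) 1, coeff (P 2) 2:]"
    using deg poly_coeffs_deg2[of "P 2"] by simp
  have "Qop mm nn p 0 (P 2) = smult (coeff (P 2) 2) p"
    by (subst P2) (simp add: Qop_quadratic m0 n0)
  then have "smult (coeff (P 2) 2) p = smult (c 2) (P 2)" using eig by simp
  moreover have "coeff (P 2) 2 \<noteq> 0" using deg by (metis leading_coeff_0_iff)
  ultimately have "degree p \<le> 2" using deg degree_le_of_eigen by metis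
  then obtain a0 a1 a2 where p: "p = [:a0, a1, a2:]" by (metis poly_coeffs_deg2)
  have mass: "a0 + a1 * mm 1 + a2 * mm 2 = 0"
    using Ep m0 by (simp add: p Eseq_pCons Eseq_const numeral_2_eq_2 algebra_simps)
  have first: "a0 * mm 1 + a1 * mm 2 + a2 * mm 3 = 0"
    using annih[of "[:0, 1:]"] m0 by (simp add: p Eseq_pCons Eseq_const eval_nat_numeral algebra_simps)
  have a2: "a2 \<noteq> 0"
  proof
    assume a2: "a2 = 0"
    then have "a0 = - (a1 * mm 1)" "a0 * mm 1 + a1 * mm 2 = 0"
      using mass first by (simp_all add: eq_neg_iff_add_eq_0)
    then have "a1 * (mm 2 - mm 1 ^ 2) = 0" by (simp add: algebra_simps power2_eq_square)
    then have "a1 = 0" "a0 = 0" using var \<open>a0 = - (a1 * mm 1)\<close> by simp_all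
    then show False using p0 p a2 by simp
  qed
  have rel: "a1 + a2 * mm 1 + a2 * nn 1 = 0"
    by (rule eigen_cubic_relation[where P="P 3" and c="c 3"]) (use m0 n0 eig deg p in auto)
  show "nn 2 = nn 1 ^ 2"
    by (rule eigen_quartic_variance[where P="P 4" and c="c 4", OF m0 n0 a2 mass rel])
      (use eig deg p in auto)
  have root: "poly (Lseq mm p) (nn 1) = 0"
    using rel m0 by (simp add: p Lseq_pCons Eseq_pCons Eseq_const algebra_simps)
  have "degree p = 2" using p a2 by simp
  then show "Eseq mm (f * [:- mm 1, 1:]) = (mm 2 - mm 1 ^ 2) * poly (Lseq mm f) (nn 1)"
    by (rule identity_modulo_annihilator[OF m0 annih _ root])
qed

text \<open>The last hypothesis says that a moment sequence of variance zero is that of a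
  point mass; it is needed only in the degenerate case \<open>q = 0\<close>.\<close>
lemma moment_identity_algebraic:
  fixes mm nn :: "nat \<Rightarrow> 'a::field_char_0" and P :: "nat \<Rightarrow> 'a poly"
  assumes m0: "mm 0 = 1" and n0: "nn 0 = 1"
    and deg: "\<forall>k. P k \<noteq> 0 \<and> degree (P k) = k"
    and eig: "\<forall>k. \<exists>c. Qop mm nn p q (P k) = smult c (P k)"
    and orth: "\<forall>k j. k \<noteq> j \<longrightarrow> Eseq mm (P k * P j) = 0"
    and pq: "p \<noteq> 0 \<or> q \<noteq> 0" and var: "mm 2 - mm 1 ^ 2 \<noteq> 0"
    and point_mass: "nn 2 = nn 1 ^ 2 \<Longrightarrow> nn = (\<lambda>k. nn 1 ^ k)"
  shows "Eseq mm (f * [:- mm 1, 1:]) = (mm 2 - mm 1 ^ 2) * Eseq nn (Lseq mm f)"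
proof -
  define \<gamma> where "\<gamma> = mm 2 - mm 1 ^ 2"
  obtain c where c: "\<forall>k. Qop mm nn p q (P k) = smult (c k) (P k)" using eig by metis
  have sym: "Eseq mm (g * Qop mm nn p q f) = Eseq mm (f * Qop mm nn p q g)" for f g
    by (rule Qop_selfadjoint[OF deg c orth])
  note Eq = selfadjoint_identities(1)[OF m0 sym]
    and relation = selfadjoint_identities(2)[OF m0 sym]
  have P1: "P 1 = [:coeff (P 1) 0, coeff (P 1) 1:]"
    using deg poly_coeffs_deg1[of "P 1"] by simp
  have "Qop mm nn p q (P 1) = smult (coeff (P 1) 1) q"
    by (subst P1) (simp add: Qop_linear m0)
  then have "smult (coeff (P 1) 1) q = smult (c 1) (P 1)" using c by simp
  moreover have "coeff (P 1) 1 \<noteq> 0" using deg by (metis leading_coeff_0_iff)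
  ultimately have "degree q \<le> 1" using deg degree_le_of_eigen by metis
  then obtain q0 qa where "q = [:q0, qa:]" by (metis poly_coeffs_deg1)
  moreover have "q0 = - (qa * mm 1)"
    using Eq m0 \<open>q = [:q0, qa:]\<close> by (simp add: Eseq_pCons Eseq_const eq_neg_iff_add_eq_0)
  ultimately have q: "q = smult qa [:- mm 1, 1:]" by simp
  have Efq: "Eseq mm (f * q) = qa * Eseq mm (f * [:- mm 1, 1:])" for f
    by (simp only: q mult_smult_right Eseq_smult)
  have x_var: "Eseq mm ([:0, 1:] * [:- mm 1, 1:]) = \<gamma>"
    using m0 by (simp add: Eseq_pCons Eseq_const \<gamma>_def power2_eq_square numeral_2_eq_2)
  have x_mean: "Eseq nn (Lseq mm [:0, 1:]) = 1"
    using m0 n0 by (simp add: Lseq_pCons Eseq_const)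
  have p_mass: "qa * \<gamma> + Eseq mm p = 0"
    using relation[of "[:0, 1:]"] by (simp only: Efq x_var x_mean mult_1_right)
  show ?thesis
  proof (cases "Eseq mm p = 0")
    case False
    then have "qa \<noteq> 0" using p_mass by auto
    define A B where "A = Eseq mm (f * [:- mm 1, 1:])" "B = Eseq nn (Lseq mm f)"
    have "qa * A + Eseq mm p * B = 0"
      using relation[of f] unfolding A_B_def by (simp only: Efq)
    moreover have "Eseq mm p = - (qa * \<gamma>)"
      using p_mass by (simp add: eq_neg_iff_add_eq_0 add.commute)
    then have "qa * (A - \<gamma> * B) = qa * A + Eseq mm p * B"
      by (simp add: algebra_simps)
    ultimately have "qa * (A - \<gamma> * B) = 0" by simp
    then show ?thesis using \<open>qa \<noteq> 0\<close> unfolding A_B_def \<gamma>_def by simp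
  next
    case True
    then have "q = 0" using p_mass var q unfolding \<gamma>_def by simp
    then have "p \<noteq> 0" and c0: "\<forall>k. Qop mm nn p 0 (P k) = smult (c k) (P k)"
      and sym0: "\<And>f g. Eseq mm (g * Qop mm nn p 0 f) = Eseq mm (f * Qop mm nn p 0 g)"
      using pq c sym by auto
    note degenerate = moment_identity_degenerate[OF m0 n0 deg c0 sym0 \<open>p \<noteq> 0\<close> True var]
    have "nn = (\<lambda>k. nn 1 ^ k)" by (rule point_mass[OF degenerate(1)])
    then show ?thesis using degenerate(2)[of f] by (metis Eseq_powers)
  qed
qed
section \<open>From measures to moment sequences\<close>

lemma compactly_supported_AE_bounded:
  assumes "compactly_supported M"
  shows "\<exists>R. AE x in M. \<bar>x\<bar> \<le> R"
proof -
  obtain K where K: "compact K" "K \<in> sets M" "emeasure M (space M - K) = 0"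
    using assms unfolding compactly_supported_def by blast
  obtain R where R: "\<forall>x\<in>K. norm x \<le> R"
    using compact_imp_bounded[OF K(1)] bounded_iff by metis
  have "AE x in M. x \<in> K"
    using K by (intro AE_I'[of "space M - K"]) auto
  then have "AE x in M. \<bar>x\<bar> \<le> R" by eventually_elim (use R in auto)
  then show ?thesis by blast
qed

lemma continuous_borel_measurable:
  fixes g :: "real \<Rightarrow> 'b::topological_space"
  assumes "sets M = sets borel" "continuous_on UNIV g"
  shows "g \<in> borel_measurable M"
  by (subst measurable_cong_sets[OF assms(1) refl]) (rule borel_measurable_continuous_onI[OF assms(2)])

lemma continuous_integrable:
  fixes g :: "real \<Rightarrow> 'b::{banach,second_countable_topology}"
  assumes "finite_measure M" "sets M = sets borel" "AE x in M. \<bar>x\<bar> \<le> R"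
    and "continuous_on UNIV g"
  shows "integrable M g"
proof -
  have "compact (g ` {-R..R})"
    by (intro compact_continuous_image continuous_on_subset[OF assms(4)]) auto
  then obtain B where B: "\<forall>y \<in> g ` {-R..R}. norm y \<le> B"
    using compact_imp_bounded bounded_iff by metis
  have "AE x in M. norm (g x) \<le> B"
    using assms(3) by eventually_elim (use B in \<open>force simp: abs_le_iff\<close>)
  moreover have "g \<in> borel_measurable M"
    by (rule continuous_borel_measurable[OF assms(2,4)])
  ultimately show ?thesis
    using assms(1) by (intro finite_measure.integrable_const_bound) auto
qed

lemma Eseq_moment:
  assumes "finite_measure M" "sets M = sets borel" "AE x in M. \<bar>x\<bar> \<le> R"
  shows "Eseq (moment M) f = (\<integral>x. poly f x \<partial>M)"
proof -
  have int: "integrable M (\<lambda>x. x ^ k)" for k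
    by (rule continuous_integrable[OF assms]) (intro continuous_intros)
  have "(\<integral>x. poly f x \<partial>M) = (\<integral>x. (\<Sum>k\<le>degree f. coeff f k * x ^ k) \<partial>M)"
    by (simp add: poly_altdef)
  also have "\<dots> = (\<Sum>k\<le>degree f. coeff f k * moment M k)"
    using int by (simp add: moment_def)
  finally show ?thesis unfolding Eseq_def by simp
qed

lemma moment_0: "prob_space M \<Longrightarrow> moment M 0 = 1"
  unfolding moment_def by (simp add: prob_space.prob_space)

lemma second_moment_about:
  assumes "prob_space M" "sets M = sets borel" "AE x in M. \<bar>x\<bar> \<le> R"
  shows "(\<integral>x. (x - c) ^ 2 \<partial>M) = moment M 2 - 2 * c * moment M 1 + c ^ 2"
proof -
  have square: "(\<lambda>x. (x - c) ^ 2) = poly [:c ^ 2, - 2 * c, 1:]"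
    by (rule ext) (simp add: power2_eq_square algebra_simps)
  have "(\<integral>x. (x - c) ^ 2 \<partial>M) = Eseq (moment M) [:c ^ 2, - 2 * c, 1:]"
    unfolding square by (rule Eseq_moment[OF prob_space.finite_measure[OF assms(1)] assms(2,3), symmetric])
  then show ?thesis
    using moment_0[OF assms(1)] by (simp add: Eseq_pCons Eseq_const numeral_2_eq_2 algebra_simps)
qed

lemma AE_eq_of_second_moment_zero:
  fixes M :: "real measure"
  assumes "prob_space M" "sets M = sets borel" "AE x in M. \<bar>x\<bar> \<le> R"
    and "(\<integral>x. (x - c) ^ 2 \<partial>M) = 0"
  shows "AE x in M. x = c"
proof -
  have "integrable M (\<lambda>x. (x - c) ^ 2)"
    by (rule continuous_integrable[OF prob_space.finite_measure[OF assms(1)] assms(2,3)])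
      (intro continuous_intros)
  then have "AE x in M. (x - c) ^ 2 = 0"
    using assms(4) integral_nonneg_eq_0_iff_AE[of M "\<lambda>x. (x - c) ^ 2"] by auto
  then show ?thesis by eventually_elim simp
qed

lemma AE_eq_imp_return:
  assumes "prob_space M" "sets M = sets borel" "AE x in M. x = c"
  shows "M = return borel c"
proof (rule measure_eqI)
  interpret prob_space M by fact
  show "sets M = sets (return borel c)" using assms(2) by simp
  fix A assume A: "A \<in> sets M"
  have sp: "space M = UNIV" using sets_eq_imp_space_eq[OF assms(2)] by simp
  show "emeasure M A = emeasure (return borel c) A"
  proof (cases "c \<in> A")
    case True
    have "AE x in M. x \<in> A \<longleftrightarrow> x \<in> space M" using assms(3) by eventually_elim (use True sp in auto)
    then have "emeasure M A = emeasure M (space M)" using A by (intro emeasure_eq_AE) auto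
    then show ?thesis using True A assms(2) by (simp add: emeasure_space_1)
  next
    case False
    have "AE x in M. x \<in> A \<longleftrightarrow> x \<in> {}" using assms(3) by eventually_elim (use False in auto)
    then have "emeasure M A = emeasure M {}" using A by (intro emeasure_eq_AE) auto
    then show ?thesis using False A assms(2) by simp
  qed
qed

lemma variance_pos:
  assumes "prob_space M" "sets M = sets borel" "AE x in M. \<bar>x\<bar> \<le> R"
    and "\<forall>a. M \<noteq> return borel a"
  shows "moment M 2 - moment M 1 ^ 2 > 0"
proof -
  let ?c = "moment M 1"
  have var: "(\<integral>x. (x - ?c) ^ 2 \<partial>M) = moment M 2 - moment M 1 ^ 2"
    using second_moment_about[OF assms(1-3)] by (simp add: power2_eq_square)
  have "(\<integral>x. (x - ?c) ^ 2 \<partial>M) \<noteq> 0"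
    using AE_eq_of_second_moment_zero[OF assms(1-3)] AE_eq_imp_return[OF assms(1,2)] assms(4)
    by blast
  moreover have "(\<integral>x. (x - ?c) ^ 2 \<partial>M) \<ge> 0" by simp
  ultimately show ?thesis unfolding var by linarith
qed

lemma variance_zero_moments:
  assumes "prob_space M" "sets M = sets borel" "AE x in M. \<bar>x\<bar> \<le> R"
    and "moment M 2 = moment M 1 ^ 2"
  shows "moment M = (\<lambda>k. moment M 1 ^ k)"
proof
  fix k
  let ?c = "moment M 1"
  have "(\<integral>x. (x - ?c) ^ 2 \<partial>M) = 0"
    using second_moment_about[OF assms(1-3)] assms(4) by (simp add: power2_eq_square)
  then have "AE x in M. x = ?c" by (rule AE_eq_of_second_moment_zero[OF assms(1-3)])
  then have "(\<integral>x. x ^ k \<partial>M) = (\<integral>x. ?c ^ k \<partial>M)"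
    by (intro integral_cong_AE continuous_borel_measurable[OF assms(2)])
      (auto elim: AE_mp intro: continuous_intros)
  then show "moment M k = ?c ^ k"
    unfolding moment_def using prob_space.prob_space[OF assms(1)] by simp
qed

lemma moment_identity:
  fixes M N :: "real measure" and p q :: "real poly" and P :: "nat \<Rightarrow> real poly"
  assumes PM: "prob_space M" "sets M = sets borel" "AE x in M. \<bar>x\<bar> \<le> R"
    and PN: "prob_space N" "sets N = sets borel" "AE x in N. \<bar>x\<bar> \<le> R"
    and nondeg: "\<forall>a. M \<noteq> return borel a"
    and pq: "p \<noteq> 0 \<or> q \<noteq> 0"
    and deg: "\<forall>n. P n \<noteq> 0 \<and> degree (P n) = n"
    and eig: "\<forall>n. \<exists>c::real. p * Lop N (Lop M (P n)) + q * Lop M (P n) = smult c (P n)"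
    and orth: "\<forall>n m. n \<noteq> m \<longrightarrow> (\<integral>x. poly (P n) x * poly (P m) x \<partial>M) = 0"
  shows "(\<integral>x. (x - moment M 1) * poly f x \<partial>M)
      = (moment M 2 - moment M 1 ^ 2) * (\<integral>y. poly (Lop M f) y \<partial>N)"
proof -
  note EM = Eseq_moment[OF prob_space.finite_measure[OF PM(1)] PM(2,3)]
    and EN = Eseq_moment[OF prob_space.finite_measure[OF PN(1)] PN(2,3)]
  have algebraic: "Eseq (moment M) (f * [:- moment M 1, 1:])
      = (moment M 2 - moment M 1 ^ 2) * Eseq (moment N) (Lseq (moment M) f)"
  proof (rule moment_identity_algebraic[where P=P])
    show "moment M 0 = 1" "moment N 0 = 1" using moment_0 PM(1) PN(1) by auto
    show "\<forall>k. P k \<noteq> 0 \<and> degree (P k) = k" "p \<noteq> 0 \<or> q \<noteq> 0" by (fact deg, fact pq)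
    show "\<forall>k. \<exists>c. Qop (moment M) (moment N) p q (P k) = smult c (P k)"
      using eig unfolding Qop_def Lop_eq_Lseq .
    show "\<forall>k j. k \<noteq> j \<longrightarrow> Eseq (moment M) (P k * P j) = 0"
      using orth by (simp add: EM)
    show "moment M 2 - moment M 1 ^ 2 \<noteq> 0"
      using variance_pos[OF PM nondeg] by simp
  qed (rule variance_zero_moments[OF PN])
  have product: "(\<lambda>x. (x - moment M 1) * poly f x) = poly (f * [:- moment M 1, 1:])"
    by (rule ext) (simp add: algebra_simps)
  have "(\<integral>x. (x - moment M 1) * poly f x \<partial>M) = Eseq (moment M) (f * [:- moment M 1, 1:])"
    unfolding product by (rule EM[symmetric])
  then show ?thesis using algebraic by (simp only: Lop_eq_Lseq EN)
qed

section \<open>Divided differences\<close>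

text \<open>\<open>divdiff f s t\<close> is \<open>L\<^sub>\<delta>\<^sub>t f\<close> evaluated at \<open>s\<close>, for the point mass \<open>\<delta>\<^sub>t\<close> (moments \<open>t ^ k\<close>);
  it is the divided difference \<open>(f(s) - f(t)) / (s - t)\<close>, extended to the diagonal by \<open>f'\<close>.
  Integrating in \<open>t\<close> recovers \<open>L\<^sub>\<mu> f\<close>, so \<open>L\<^sub>\<mu>\<close> can be handled pointwise.\<close>
definition divdiff :: "real poly \<Rightarrow> real \<Rightarrow> real \<Rightarrow> real" where
  "divdiff f s t = poly (Lseq (\<lambda>k. t ^ k) f) s"

lemma divdiff_add: "divdiff (f + g) s t = divdiff f s t + divdiff g s t"
  unfolding divdiff_def by (simp add: Lseq_add)

lemma divdiff_smult: "divdiff (smult c f) s t = c * divdiff f s t"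
  unfolding divdiff_def by (simp add: Lseq_smult)

lemma divdiff_const: "divdiff [:c:] s t = 0"
  unfolding divdiff_def by simp

lemma divdiff_0: "divdiff 0 s t = 0"
  unfolding divdiff_def by simp

lemma divdiff_sum: "divdiff (\<Sum>i\<in>A. f i) s t = (\<Sum>i\<in>A. divdiff (f i) s t)"
  unfolding divdiff_def by (simp add: Lseq_sum poly_sum)

lemma divdiff_pCons: "divdiff (pCons a f) s t = s * divdiff f s t + poly f t"
  unfolding divdiff_def by (simp add: Lseq_pCons Eseq_powers)

lemma divdiff_mult: "divdiff (g * h) s t = poly g s * divdiff h s t + poly h t * divdiff g s t"
proof (induction g)
  case 0 then show ?case by (simp add: divdiff_def)
next
  case (pCons a g)
  have "pCons a g * h = smult a h + pCons 0 (g * h)" by simp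
  hence "divdiff (pCons a g * h) s t = a * divdiff h s t + (s * divdiff (g * h) s t + poly (g * h) t)"
    by (simp only: divdiff_add divdiff_smult divdiff_pCons)
  then show ?case using pCons.IH by (simp add: divdiff_pCons algebra_simps)
qed

lemma divdiff_power: "divdiff (g ^ Suc k) s t = divdiff g s t * (\<Sum>i\<le>k. poly g s ^ i * poly g t ^ (k - i))"
proof (induction k)
  case 0 then show ?case by simp
next
  case (Suc k)
  have "divdiff (g ^ Suc (Suc k)) s t = poly g s * divdiff (g ^ Suc k) s t + poly g t ^ Suc k * divdiff g s t"
    by (subst power_Suc[of g "Suc k"], subst divdiff_mult) (simp only: poly_power)
  also have "\<dots> = divdiff g s t * (poly g t ^ Suc k + (\<Sum>i\<le>k. poly g s ^ Suc i * poly g t ^ (k - i)))"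
    unfolding Suc.IH by (simp add: sum_distrib_left algebra_simps)
  also have "poly g t ^ Suc k + (\<Sum>i\<le>k. poly g s ^ Suc i * poly g t ^ (k - i))
     = (\<Sum>i\<le>Suc k. poly g s ^ i * poly g t ^ (Suc k - i))"
    by (subst sum.atMost_Suc_shift) simp
  finally show ?case .
qed

lemma continuous_divdiff: "continuous_on UNIV (\<lambda>t. divdiff f s t)"
  unfolding divdiff_def poly_Lseq by (intro continuous_intros)

lemma poly_Lop_integral:
  fixes M :: "real measure"
  assumes "finite_measure M" "sets M = sets borel" "AE x in M. \<bar>x\<bar> \<le> R"
  shows "poly (Lop M f) s = (\<integral>t. divdiff f s t \<partial>M)"
proof -
  have int: "integrable M (\<lambda>x. x ^ k)" for k
    by (rule continuous_integrable[OF assms]) (intro continuous_intros)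
  show ?thesis
    unfolding divdiff_def Lop_eq_Lseq poly_Lseq moment_def using int
    by (simp add: mult.assoc)
qed

section \<open>Polynomial approximation of the Cauchy kernel\<close>

lemma geometric_partial_sums:
  assumes "0 \<le> (x::real)" "x < 1"
  shows "(\<lambda>n. \<Sum>k\<le>n. x ^ k) \<longlonglongrightarrow> 1 / (1 - x)" "(\<Sum>k\<le>n. x ^ k) \<le> 1 / (1 - x)"
proof -
  have nx: "norm x < 1" using assms by simp
  have "(\<lambda>n. \<Sum>k<n. x ^ k) \<longlonglongrightarrow> 1 / (1 - x)" using geometric_sums[OF nx] unfolding sums_def .
  hence "(\<lambda>n. \<Sum>k<Suc n. x ^ k) \<longlonglongrightarrow> 1 / (1 - x)" by (rule LIMSEQ_Suc)
  thus "(\<lambda>n. \<Sum>k\<le>n. x ^ k) \<longlonglongrightarrow> 1 / (1 - x)" by (simp add: lessThan_Suc_atMost)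
  have "(\<Sum>k\<le>n. x ^ k) \<le> (\<Sum>k. x ^ k)"
    by (rule sum_le_suminf[OF summable_geometric[OF nx]]) (use assms in auto)
  thus "(\<Sum>k\<le>n. x ^ k) \<le> 1 / (1 - x)" using suminf_geometric[OF nx] by simp
qed

lemma geometric_product_partial_sums:
  assumes "0 \<le> (x::real)" "x < 1" "0 \<le> (y::real)" "y < 1"
  shows "(\<lambda>n. \<Sum>k<n. \<Sum>i\<le>k. x ^ i * y ^ (k - i)) \<longlonglongrightarrow> 1 / ((1 - x) * (1 - y))"
    "(\<Sum>k<n. \<Sum>i\<le>k. x ^ i * y ^ (k - i)) \<le> 1 / ((1 - x) * (1 - y))"
proof -
  have nx: "norm x < 1" "norm y < 1" using assms by auto
  have s: "(\<lambda>k. \<Sum>i\<le>k. x ^ i * y ^ (k - i)) sums ((\<Sum>k. x ^ k) * (\<Sum>k. y ^ k))"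
  proof (rule Cauchy_product_sums)
    show "summable (\<lambda>k. norm (x ^ k))" using summable_geometric[OF nx(1)] assms by (simp add: norm_power)
    show "summable (\<lambda>k. norm (y ^ k))" using summable_geometric[OF nx(2)] assms by (simp add: norm_power)
  qed
  have e: "(\<Sum>k. x ^ k) * (\<Sum>k. y ^ k) = 1 / ((1 - x) * (1 - y))"
    using suminf_geometric[OF nx(1)] suminf_geometric[OF nx(2)] by simp
  show "(\<lambda>n. \<Sum>k<n. \<Sum>i\<le>k. x ^ i * y ^ (k - i)) \<longlonglongrightarrow> 1 / ((1 - x) * (1 - y))"
    using s unfolding sums_def e .
  show "(\<Sum>k<n. \<Sum>i\<le>k. x ^ i * y ^ (k - i)) \<le> 1 / ((1 - x) * (1 - y))"
    unfolding e[symmetric] sums_unique[OF s]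
    by (rule sum_le_suminf[OF sums_summable[OF s]]) (use assms in \<open>auto intro!: sum_nonneg\<close>)
qed

lemma inverse_one_minus_le:
  fixes u \<rho> :: real
  assumes "0 \<le> u" "u \<le> \<rho>" "\<rho> < 1"
  shows "1 / (1 - u) \<le> 1 / (1 - \<rho>)" "0 < 1 / (1 - u)" "u < 1"
proof -
  have h: "0 < 1 - \<rho>" "1 - \<rho> \<le> 1 - u" using assms by auto
  show "1 / (1 - u) \<le> 1 / (1 - \<rho>)" using h by (intro divide_left_mono) (auto intro: mult_pos_pos)
  show "0 < 1 / (1 - u)" "u < 1" using h by auto
qed

text \<open>Fix \<open>z = a + i b\<close> with \<open>b \<noteq> 0\<close> and a bound \<open>R\<close> for the supports.  With the scale
  \<open>K = (R + |a|)\<^sup>2 + b\<^sup>2 + 1\<close> the quadratic \<open>u(x) = 1 - |z - x|\<^sup>2 / K\<close> takes values in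
  \<open>[0, 1 - b\<^sup>2/K]\<close> on \<open>[-R, R]\<close>, so \<open>1 / |z - x|\<^sup>2 = (1/K) \<Sum> u(x)\<^sup>k\<close> converges uniformly there.
  Hence \<open>1 / (z - x) = (cnj z - x) / |z - x|\<^sup>2\<close> is approximated by the polynomials
  \<open>(cnj z - x) S\<^sub>n(x) / K\<close>, where \<open>S\<^sub>n = \<Sum>\<^sub>k\<^sub>\<le>\<^sub>n u\<^sup>k\<close>; \<open>kre\<close> and \<open>kim\<close> are their real and
  imaginary parts.\<close>
definition kscale :: "real \<Rightarrow> real \<Rightarrow> real \<Rightarrow> real" where
  "kscale a b R = (R + \<bar>a\<bar>)^2 + b^2 + 1"

definition uval :: "real \<Rightarrow> real \<Rightarrow> real \<Rightarrow> real \<Rightarrow> real" where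
  "uval a b R x = 1 - ((x - a)^2 + b^2) / kscale a b R"

definition upoly :: "real \<Rightarrow> real \<Rightarrow> real \<Rightarrow> real poly" where
  "upoly a b R = [:1 - (a^2 + b^2) / kscale a b R, 2 * a / kscale a b R, -1 / kscale a b R:]"

definition gsum :: "real \<Rightarrow> real \<Rightarrow> real \<Rightarrow> nat \<Rightarrow> real poly" where
  "gsum a b R n = (\<Sum>k\<le>n. upoly a b R ^ k)"

definition kre :: "real \<Rightarrow> real \<Rightarrow> real \<Rightarrow> nat \<Rightarrow> real poly" where
  "kre a b R n = smult (1 / kscale a b R) ([:a, -1:] * gsum a b R n)"

definition kim :: "real \<Rightarrow> real \<Rightarrow> real \<Rightarrow> nat \<Rightarrow> real poly" where
  "kim a b R n = smult (- b / kscale a b R) (gsum a b R n)"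

lemma kscale_pos: "kscale a b R > 0"
  unfolding kscale_def by (simp add: add_nonneg_pos)

lemma poly_upoly: "poly (upoly a b R) x = uval a b R x"
  using kscale_pos[of a b R] unfolding upoly_def uval_def
  by (simp add: field_simps power2_eq_square)

lemma one_minus_uval: "1 - uval a b R x = ((x - a)^2 + b^2) / kscale a b R"
  unfolding uval_def by simp

lemma uval_bounds:
  assumes "b \<noteq> 0" "\<bar>x\<bar> \<le> R"
  shows "0 \<le> uval a b R x" "uval a b R x \<le> 1 - b^2 / kscale a b R" "1 - b^2 / kscale a b R < 1"
proof -
  have K: "kscale a b R > 0" by (rule kscale_pos)
  have "\<bar>x - a\<bar> \<le> R + \<bar>a\<bar>" using assms(2) by linarith
  hence "(x - a)^2 \<le> (R + \<bar>a\<bar>)^2" by (metis abs_ge_zero power2_abs power_mono)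
  hence "(x - a)^2 + b^2 \<le> kscale a b R" unfolding kscale_def by linarith
  hence "((x - a)^2 + b^2) / kscale a b R \<le> 1" using K by simp
  thus "0 \<le> uval a b R x" unfolding uval_def by simp
  have "b^2 / kscale a b R \<le> ((x - a)^2 + b^2) / kscale a b R" using K by (simp add: divide_right_mono)
  thus "uval a b R x \<le> 1 - b^2 / kscale a b R" unfolding uval_def by simp
  have "b^2 > 0" using assms(1) by simp
  thus "1 - b^2 / kscale a b R < 1" using K by simp
qed

lemma poly_gsum: "poly (gsum a b R n) x = (\<Sum>k\<le>n. uval a b R x ^ k)"
  unfolding gsum_def by (simp add: poly_sum poly_power poly_upoly)

lemma divdiff_upoly: "divdiff (upoly a b R) s t = - (s + t - 2 * a) / kscale a b R"
  using kscale_pos[of a b R] unfolding upoly_def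
  by (simp add: divdiff_pCons divdiff_const divdiff_0 field_simps)

lemma divdiff_gsum: "divdiff (gsum a b R n) s t = divdiff (upoly a b R) s t *
   (\<Sum>k<n. \<Sum>i\<le>k. uval a b R s ^ i * uval a b R t ^ (k - i))"
proof -
  have "divdiff (gsum a b R n) s t = (\<Sum>k\<le>n. divdiff (upoly a b R ^ k) s t)"
    unfolding gsum_def by (rule divdiff_sum)
  also have "\<dots> = divdiff (upoly a b R ^ 0) s t + (\<Sum>k<n. divdiff (upoly a b R ^ Suc k) s t)"
    by (rule sum.atMost_shift)
  also have "divdiff (upoly a b R ^ 0) s t = 0" using divdiff_const[of 1 s t] by (simp add: one_pCons)
  finally show ?thesis by (simp only: divdiff_power poly_upoly sum_distrib_left)
qed

lemma poly_kre: "poly (kre a b R n) x = (a - x) * poly (gsum a b R n) x / kscale a b R"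
  unfolding kre_def by (simp add: algebra_simps diff_divide_distrib)

lemma poly_kim: "poly (kim a b R n) x = - b * poly (gsum a b R n) x / kscale a b R"
  unfolding kim_def by simp

lemma divdiff_kre: "divdiff (kre a b R n) s t
    = ((a - s) * divdiff (gsum a b R n) s t - poly (gsum a b R n) t) / kscale a b R"
proof -
  have "divdiff [:a, -1:] s t = -1" by (simp add: divdiff_pCons divdiff_const divdiff_0)
  thus ?thesis unfolding kre_def divdiff_smult divdiff_mult by simp
qed

lemma divdiff_kim: "divdiff (kim a b R n) s t = - b * divdiff (gsum a b R n) s t / kscale a b R"
  by (simp only: kim_def divdiff_smult) simp

lemma times_cnj_diff:
  "(z - complex_of_real x) * (cnj z - complex_of_real x) = complex_of_real ((x - Re z)^2 + (Im z)^2)"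
  by (simp add: complex_eq_iff power2_eq_square algebra_simps)

lemma nonreal_diff_nonzero: "Im z \<noteq> 0 \<Longrightarrow> z - complex_of_real x \<noteq> 0"
  by (metis Im_complex_of_real cancel_comm_monoid_add_class.diff_cancel diff_zero right_minus_eq)

lemma nonreal_cnj_diff_nonzero: "Im z \<noteq> 0 \<Longrightarrow> cnj z - complex_of_real x \<noteq> 0"
  by (metis complex_cnj_complex_of_real complex_cnj_diff complex_cnj_zero_iff nonreal_diff_nonzero)

lemma nonreal_dist_pos: "Im z \<noteq> 0 \<Longrightarrow> (x - Re z)^2 + (Im z)^2 > 0"
  by (simp add: add_nonneg_pos)

lemma cnj_decomp: "cnj z = complex_of_real (Re z) - \<i> * complex_of_real (Im z)"
  by (simp add: complex_eq_iff)

lemma kernel_limit_eq: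
  assumes "Im z \<noteq> 0"
  shows "(cnj z - complex_of_real x) / complex_of_real (kscale (Re z) (Im z) R)
      * complex_of_real (1 / (1 - uval (Re z) (Im z) R x)) = 1 / (z - complex_of_real x)"
proof -
  define D where "D = (x - Re z)^2 + (Im z)^2"
  have D: "D > 0" unfolding D_def using nonreal_dist_pos[OF assms] .
  have K: "kscale (Re z) (Im z) R > 0" by (rule kscale_pos)
  have "complex_of_real (1 / (1 - uval (Re z) (Im z) R x)) = complex_of_real (kscale (Re z) (Im z) R) / complex_of_real D"
    unfolding one_minus_uval D_def by simp
  hence "(cnj z - complex_of_real x) / complex_of_real (kscale (Re z) (Im z) R)
      * complex_of_real (1 / (1 - uval (Re z) (Im z) R x)) = (cnj z - complex_of_real x) / complex_of_real D"
    using K by simp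
  also have "\<dots> = (cnj z - complex_of_real x) / ((z - complex_of_real x) * (cnj z - complex_of_real x))"
    unfolding D_def times_cnj_diff ..
  also have "\<dots> = 1 / (z - complex_of_real x)" using nonreal_cnj_diff_nonzero[OF assms] by simp
  finally show ?thesis .
qed

lemma kernel_dd_limit_eq:
  assumes "Im z \<noteq> 0"
  shows "((cnj z - complex_of_real s) * complex_of_real (divdiff (upoly (Re z) (Im z) R) s t
           * (1 / ((1 - uval (Re z) (Im z) R s) * (1 - uval (Re z) (Im z) R t))))
         - complex_of_real (1 / (1 - uval (Re z) (Im z) R t))) / complex_of_real (kscale (Re z) (Im z) R)
      = 1 / ((z - complex_of_real s) * (z - complex_of_real t))"
proof -
  define a b where "a = Re z" "b = Im z"
  define K where "K = kscale a b R"
  define Ds Dt where "Ds = (s - a)^2 + b^2" "Dt = (t - a)^2 + b^2"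
  have K: "K > 0" unfolding K_def by (rule kscale_pos)
  have Ds: "Ds > 0" "Dt > 0" unfolding Ds_Dt_def a_b_def using nonreal_dist_pos[OF assms] by auto
  have zs: "(z - complex_of_real s) * (cnj z - complex_of_real s) = complex_of_real Ds"
    unfolding Ds_Dt_def a_b_def by (rule times_cnj_diff)
  have zt: "(z - complex_of_real t) * (cnj z - complex_of_real t) = complex_of_real Dt"
    unfolding Ds_Dt_def a_b_def by (rule times_cnj_diff)
  have cz: "cnj z = 2 * complex_of_real a - z" unfolding a_b_def by (simp add: complex_eq_iff)
  have ne: "z - complex_of_real s \<noteq> 0" "z - complex_of_real t \<noteq> 0"
    "cnj z - complex_of_real s \<noteq> 0" "cnj z - complex_of_real t \<noteq> 0"
    using nonreal_diff_nonzero[OF assms] nonreal_cnj_diff_nonzero[OF assms] by auto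
  have r1: "divdiff (upoly a b R) s t * (1 / ((1 - uval a b R s) * (1 - uval a b R t)))
      = - (s + t - 2 * a) * K / (Ds * Dt)"
    unfolding divdiff_upoly one_minus_uval K_def[symmetric] Ds_Dt_def[symmetric] using K Ds
    by (simp add: field_simps)
  have r2: "1 / (1 - uval a b R t) = K / Dt"
    unfolding one_minus_uval K_def[symmetric] Ds_Dt_def[symmetric] using K Ds by (simp add: field_simps)
  have cne: "complex_of_real K \<noteq> 0" "complex_of_real Ds \<noteq> 0" "complex_of_real Dt \<noteq> 0" using K Ds by auto
  have L: "((cnj z - complex_of_real s) * complex_of_real (divdiff (upoly a b R) s t
           * (1 / ((1 - uval a b R s) * (1 - uval a b R t))))
         - complex_of_real (1 / (1 - uval a b R t))) / complex_of_real K
       = (- (cnj z - complex_of_real s) * complex_of_real (s + t - 2 * a) - complex_of_real Ds)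
          / (complex_of_real Ds * complex_of_real Dt)"
    unfolding r1 r2 using cne by (simp add: field_simps)
  have "(- (cnj z - complex_of_real s) * complex_of_real (s + t - 2 * a) - complex_of_real Ds)
      = (cnj z - complex_of_real s) * (cnj z - complex_of_real t)"
    unfolding zs[symmetric] cz by (simp add: algebra_simps)
  hence "(- (cnj z - complex_of_real s) * complex_of_real (s + t - 2 * a) - complex_of_real Ds)
          / (complex_of_real Ds * complex_of_real Dt)
      = ((cnj z - complex_of_real s) * (cnj z - complex_of_real t)) /
        (((z - complex_of_real s) * (cnj z - complex_of_real s)) * ((z - complex_of_real t) * (cnj z - complex_of_real t)))"
    unfolding zs zt by simp
  also have "\<dots> = 1 / ((z - complex_of_real s) * (z - complex_of_real t))"
    using ne by (simp add: divide_simps)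
  finally have "(- (cnj z - complex_of_real s) * complex_of_real (s + t - 2 * a) - complex_of_real Ds)
          / (complex_of_real Ds * complex_of_real Dt)
      = 1 / ((z - complex_of_real s) * (z - complex_of_real t))" .
  thus ?thesis using L unfolding a_b_def K_def by simp
qed

definition kernel :: "complex \<Rightarrow> real \<Rightarrow> nat \<Rightarrow> real \<Rightarrow> complex" where
  "kernel z R n x = complex_of_real (poly (kre (Re z) (Im z) R n) x)
      + \<i> * complex_of_real (poly (kim (Re z) (Im z) R n) x)"

definition kernel_dd :: "complex \<Rightarrow> real \<Rightarrow> nat \<Rightarrow> real \<Rightarrow> real \<Rightarrow> complex" where
  "kernel_dd z R n s t = complex_of_real (divdiff (kre (Re z) (Im z) R n) s t)
      + \<i> * complex_of_real (divdiff (kim (Re z) (Im z) R n) s t)"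

lemma kernel_closed: "kernel z R n x = (cnj z - complex_of_real x) / complex_of_real (kscale (Re z) (Im z) R)
    * complex_of_real (poly (gsum (Re z) (Im z) R n) x)"
proof -
  have "complex_of_real (kscale (Re z) (Im z) R) \<noteq> 0" using kscale_pos[of "Re z" "Im z" R] by simp
  thus ?thesis unfolding kernel_def poly_kre poly_kim cnj_decomp by (simp add: field_simps)
qed

lemma kernel_dd_closed: "kernel_dd z R n s t = ((cnj z - complex_of_real s) * complex_of_real (divdiff (gsum (Re z) (Im z) R n) s t)
    - complex_of_real (poly (gsum (Re z) (Im z) R n) t)) / complex_of_real (kscale (Re z) (Im z) R)"
proof -
  have "complex_of_real (kscale (Re z) (Im z) R) \<noteq> 0" using kscale_pos[of "Re z" "Im z" R] by simp
  thus ?thesis unfolding kernel_dd_def divdiff_kre divdiff_kim cnj_decomp by (simp add: field_simps)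
qed

lemma kernel_lim:
  assumes "Im z \<noteq> 0" "\<bar>x\<bar> \<le> R"
  shows "(\<lambda>n. kernel z R n x) \<longlonglongrightarrow> 1 / (z - complex_of_real x)"
proof -
  note ub = uval_bounds[OF assms(1,2), of "Re z"]
  have "(\<lambda>n. complex_of_real (poly (gsum (Re z) (Im z) R n) x)) \<longlonglongrightarrow>
      complex_of_real (1 / (1 - uval (Re z) (Im z) R x))"
    unfolding poly_gsum by (intro tendsto_of_real geometric_partial_sums) (use ub in auto)
  hence "(\<lambda>n. kernel z R n x) \<longlonglongrightarrow> (cnj z - complex_of_real x) / complex_of_real (kscale (Re z) (Im z) R)
      * complex_of_real (1 / (1 - uval (Re z) (Im z) R x))"
    unfolding kernel_closed by (intro tendsto_mult tendsto_const)
  thus ?thesis unfolding kernel_limit_eq[OF assms(1)] .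
qed

lemma kernel_bound:
  assumes "Im z \<noteq> 0" "\<bar>x\<bar> \<le> R"
  shows "norm (kernel z R n x) \<le> (cmod z + R) / kscale (Re z) (Im z) R * (1 / (1 - (1 - (Im z)^2 / kscale (Re z) (Im z) R)))"
proof -
  define K \<rho> u where "K = kscale (Re z) (Im z) R" "\<rho> = 1 - (Im z)^2 / K" "u = uval (Re z) (Im z) R x"
  have K: "K > 0" unfolding K_\<rho>_u_def by (rule kscale_pos)
  have ub: "0 \<le> u" "u \<le> \<rho>" "\<rho> < 1" using uval_bounds[OF assms(1,2), of "Re z"] unfolding K_\<rho>_u_def by auto
  have S: "0 \<le> poly (gsum (Re z) (Im z) R n) x" "poly (gsum (Re z) (Im z) R n) x \<le> 1 / (1 - \<rho>)"
    unfolding poly_gsum using ub geometric_partial_sums(2)[of u n] inverse_one_minus_le[OF ub] unfolding K_\<rho>_u_def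
    by (auto intro!: sum_nonneg)
  have c: "cmod (cnj z - complex_of_real x) \<le> cmod z + R"
    using norm_triangle_ineq4[of "cnj z" "complex_of_real x"] assms(2) by simp
  have "norm (kernel z R n x) = cmod (cnj z - complex_of_real x) / K * poly (gsum (Re z) (Im z) R n) x"
    unfolding kernel_closed K_\<rho>_u_def[symmetric] using K S by (simp add: norm_mult norm_divide)
  also have "\<dots> \<le> (cmod z + R) / K * (1 / (1 - \<rho>))"
    using c S K assms(2) by (intro mult_mono divide_right_mono) auto
  finally show ?thesis unfolding K_\<rho>_u_def .
qed

lemma kernel_dd_lim:
  assumes "Im z \<noteq> 0" "\<bar>s\<bar> \<le> R" "\<bar>t\<bar> \<le> R"
  shows "(\<lambda>n. kernel_dd z R n s t) \<longlonglongrightarrow> 1 / ((z - complex_of_real s) * (z - complex_of_real t))"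
proof -
  note us = uval_bounds[OF assms(1,2), of "Re z"] and ut = uval_bounds[OF assms(1,3), of "Re z"]
  have T: "(\<lambda>n. divdiff (gsum (Re z) (Im z) R n) s t) \<longlonglongrightarrow> divdiff (upoly (Re z) (Im z) R) s t
     * (1 / ((1 - uval (Re z) (Im z) R s) * (1 - uval (Re z) (Im z) R t)))"
    unfolding divdiff_gsum by (intro tendsto_mult tendsto_const geometric_product_partial_sums) (use us ut in auto)
  have S: "(\<lambda>n. poly (gsum (Re z) (Im z) R n) t) \<longlonglongrightarrow> 1 / (1 - uval (Re z) (Im z) R t)"
    unfolding poly_gsum by (intro geometric_partial_sums) (use ut in auto)
  have "(\<lambda>n. kernel_dd z R n s t) \<longlonglongrightarrow> ((cnj z - complex_of_real s) * complex_of_real (divdiff (upoly (Re z) (Im z) R) s t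
           * (1 / ((1 - uval (Re z) (Im z) R s) * (1 - uval (Re z) (Im z) R t))))
         - complex_of_real (1 / (1 - uval (Re z) (Im z) R t))) / complex_of_real (kscale (Re z) (Im z) R)"
    unfolding kernel_dd_closed by (intro tendsto_intros T S) (use kscale_pos[of "Re z" "Im z" R] in simp)
  thus ?thesis unfolding kernel_dd_limit_eq[OF assms(1)] .
qed

lemma kernel_dd_bound:
  assumes "Im z \<noteq> 0" "\<bar>s\<bar> \<le> R" "\<bar>t\<bar> \<le> R"
  shows "norm (kernel_dd z R n s t) \<le> ((cmod z + R) * ((2 * R + 2 * \<bar>Re z\<bar>) / kscale (Re z) (Im z) R
     * (1 / (1 - (1 - (Im z)^2 / kscale (Re z) (Im z) R)))^2) + 1 / (1 - (1 - (Im z)^2 / kscale (Re z) (Im z) R)))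
     / kscale (Re z) (Im z) R"
proof -
  define K \<rho> where "K = kscale (Re z) (Im z) R" "\<rho> = 1 - (Im z)^2 / K"
  define B where "B = 1 / (1 - \<rho>)"
  define us ut where "us = uval (Re z) (Im z) R s" "ut = uval (Re z) (Im z) R t"
  have K: "K > 0" unfolding K_\<rho>_def by (rule kscale_pos)
  have R0: "0 \<le> R" using assms(2) by simp
  have ubs: "0 \<le> us" "us \<le> \<rho>" "\<rho> < 1" using uval_bounds[OF assms(1,2), of "Re z"] unfolding K_\<rho>_def us_ut_def by auto
  have ubt: "0 \<le> ut" "ut \<le> \<rho>" using uval_bounds[OF assms(1,3), of "Re z"] unfolding K_\<rho>_def us_ut_def by auto
  note ibs = inverse_one_minus_le[OF ubs] and ibt = inverse_one_minus_le[OF ubt ubs(3)]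
  have B0: "0 \<le> B" unfolding B_def using ubs by simp
  have S: "0 \<le> poly (gsum (Re z) (Im z) R n) t" "poly (gsum (Re z) (Im z) R n) t \<le> B"
    unfolding poly_gsum B_def using ubt geometric_partial_sums(2)[of ut n] ibt unfolding us_ut_def
    by (auto intro!: sum_nonneg)
  define T where "T = (\<Sum>k<n. \<Sum>i\<le>k. us ^ i * ut ^ (k - i))"
  have T0: "0 \<le> T" unfolding T_def using ubs ubt by (auto intro!: sum_nonneg)
  have "T \<le> 1 / ((1 - us) * (1 - ut))" unfolding T_def by (rule geometric_product_partial_sums(2)) (use ibs ibt ubs ubt in auto)
  also have "\<dots> = (1 / (1 - us)) * (1 / (1 - ut))" by simp
  also have "\<dots> \<le> B * B" unfolding B_def using ibs ibt ubs by (intro mult_mono) auto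
  finally have TB: "T \<le> B^2" by (simp add: power2_eq_square)
  have dU: "\<bar>divdiff (upoly (Re z) (Im z) R) s t\<bar> \<le> (2 * R + 2 * \<bar>Re z\<bar>) / K"
    unfolding divdiff_upoly K_\<rho>_def[symmetric] using K assms(2,3)
    by (simp add: abs_minus_commute divide_right_mono abs_triangle_ineq4 del: divide_minus_left)
  have dS: "\<bar>divdiff (gsum (Re z) (Im z) R n) s t\<bar> \<le> (2 * R + 2 * \<bar>Re z\<bar>) / K * B^2"
    unfolding divdiff_gsum us_ut_def[symmetric] T_def[symmetric] abs_mult using T0 TB dU
    by (intro mult_mono) auto
  have c: "cmod (cnj z - complex_of_real s) \<le> cmod z + R"
    using norm_triangle_ineq4[of "cnj z" "complex_of_real s"] assms(2) by simp
  have "norm (kernel_dd z R n s t) \<le> (cmod (cnj z - complex_of_real s) * \<bar>divdiff (gsum (Re z) (Im z) R n) s t\<bar>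
       + \<bar>poly (gsum (Re z) (Im z) R n) t\<bar>) / K"
    unfolding kernel_dd_closed K_\<rho>_def[symmetric] using K
    by (simp add: norm_divide divide_right_mono norm_mult norm_triangle_ineq4[THEN order_trans]
        del: of_real_diff)
  also have "\<dots> \<le> ((cmod z + R) * ((2 * R + 2 * \<bar>Re z\<bar>) / K * B^2) + B) / K"
    using K c dS S R0 by (intro divide_right_mono add_mono mult_mono) auto
  finally show ?thesis unfolding K_\<rho>_def B_def .
qed

lemma cauchy_kernel_approximation:
  assumes z: "Im z \<noteq> 0"
  obtains f g :: "nat \<Rightarrow> real poly" and C :: real where
    "\<And>n x. \<bar>x\<bar> \<le> R \<Longrightarrow> cmod (of_real (poly (f n) x) + \<i> * of_real (poly (g n) x)) \<le> C"
    "\<And>x. \<bar>x\<bar> \<le> R \<Longrightarrow>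
      (\<lambda>n. of_real (poly (f n) x) + \<i> * of_real (poly (g n) x)) \<longlonglongrightarrow> 1 / (z - of_real x)"
    "\<And>n s t. \<bar>s\<bar> \<le> R \<Longrightarrow> \<bar>t\<bar> \<le> R \<Longrightarrow>
      cmod (of_real (divdiff (f n) s t) + \<i> * of_real (divdiff (g n) s t)) \<le> C"
    "\<And>s t. \<bar>s\<bar> \<le> R \<Longrightarrow> \<bar>t\<bar> \<le> R \<Longrightarrow>
      (\<lambda>n. of_real (divdiff (f n) s t) + \<i> * of_real (divdiff (g n) s t))
        \<longlonglongrightarrow> 1 / ((z - of_real s) * (z - of_real t))"
proof
  let ?f = "kre (Re z) (Im z) R" and ?g = "kim (Re z) (Im z) R"
  let ?C1 = "(cmod z + R) / kscale (Re z) (Im z) R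
      * (1 / (1 - (1 - (Im z)^2 / kscale (Re z) (Im z) R)))"
  let ?C2 = "((cmod z + R) * ((2 * R + 2 * \<bar>Re z\<bar>) / kscale (Re z) (Im z) R
      * (1 / (1 - (1 - (Im z)^2 / kscale (Re z) (Im z) R)))^2)
      + 1 / (1 - (1 - (Im z)^2 / kscale (Re z) (Im z) R))) / kscale (Re z) (Im z) R"
  show "cmod (of_real (poly (?f n) x) + \<i> * of_real (poly (?g n) x)) \<le> max ?C1 ?C2"
    if "\<bar>x\<bar> \<le> R" for n x
    using kernel_bound[OF z that, of n] unfolding kernel_def by linarith
  show "(\<lambda>n. of_real (poly (?f n) x) + \<i> * of_real (poly (?g n) x)) \<longlonglongrightarrow> 1 / (z - of_real x)"
    if "\<bar>x\<bar> \<le> R" for x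
    using kernel_lim[OF z that] unfolding kernel_def .
  show "cmod (of_real (divdiff (?f n) s t) + \<i> * of_real (divdiff (?g n) s t)) \<le> max ?C1 ?C2"
    if "\<bar>s\<bar> \<le> R" "\<bar>t\<bar> \<le> R" for n s t
    using kernel_dd_bound[OF z that, of n] unfolding kernel_dd_def by linarith
  show "(\<lambda>n. of_real (divdiff (?f n) s t) + \<i> * of_real (divdiff (?g n) s t))
      \<longlonglongrightarrow> 1 / ((z - of_real s) * (z - of_real t))"
    if "\<bar>s\<bar> \<le> R" "\<bar>t\<bar> \<le> R" for s t
    using kernel_dd_lim[OF z that] unfolding kernel_dd_def .
qed

section \<open>Extending the moment identity to the Cauchy kernel\<close>

lemma integral_real_imag:
  assumes "integrable M g" "integrable M h"
  shows "(\<integral>x. of_real (g x) + \<i> * of_real (h x) \<partial>M)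
    = of_real (integral\<^sup>L M g) + \<i> * of_real (integral\<^sup>L M h)"
  using assms by simp

lemma bounded_convergence_integral:
  fixes M :: "real measure" and F :: "nat \<Rightarrow> real \<Rightarrow> complex" and f :: "real \<Rightarrow> complex"
  assumes "finite_measure M" "AE x in M. \<bar>x\<bar> \<le> R"
    and "f \<in> borel_measurable M" "\<And>n. F n \<in> borel_measurable M"
    and "\<And>n x. \<bar>x\<bar> \<le> R \<Longrightarrow> norm (F n x) \<le> C"
    and "\<And>x. \<bar>x\<bar> \<le> R \<Longrightarrow> (\<lambda>n. F n x) \<longlonglongrightarrow> f x"
  shows "(\<lambda>n. \<integral>x. F n x \<partial>M) \<longlonglongrightarrow> (\<integral>x. f x \<partial>M)"
proof (rule integral_dominated_convergence[where w="\<lambda>_. C"])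
  show "integrable M (\<lambda>_. C)" using assms(1) by (simp add: finite_measure.integrable_const)
  show "AE x in M. (\<lambda>n. F n x) \<longlonglongrightarrow> f x" using assms(2) by eventually_elim (rule assms(6))
  show "AE x in M. norm (F n x) \<le> C" for n using assms(2) by eventually_elim (rule assms(5))
qed (use assms(3,4) in auto)

lemma norm_integral_le_bound:
  fixes f :: "real \<Rightarrow> complex"
  assumes "prob_space M" "AE x in M. norm (f x) \<le> C" "integrable M f"
  shows "norm (\<integral>x. f x \<partial>M) \<le> C"
proof -
  have "norm (\<integral>x. f x \<partial>M) \<le> (\<integral>x. norm (f x) \<partial>M)" by (rule integral_norm_bound)
  also have "\<dots> \<le> (\<integral>x. C \<partial>M)"
    using assms prob_space.finite_measure[OF assms(1)]
    by (intro integral_mono_AE) (auto simp: finite_measure.integrable_const)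
  finally show ?thesis using prob_space.prob_space[OF assms(1)] by simp
qed

text \<open>Apply the polynomial identity to the approximants \<open>F\<^sub>n\<close> of
  \<open>1 / (z - x)\<close> (real and imaginary parts separately); \<open>L\<^sub>\<mu> F\<^sub>n(s)\<close> is the \<open>\<mu>\<close>-integral of the
  divided difference of \<open>F\<^sub>n\<close>.  By bounded convergence (three times) the identity passes to the
  limit, giving \<open>(z - c) G\<^sub>\<mu>(z) - 1 = \<gamma> G\<^sub>\<mu>(z) G\<^sub>\<nu>(z)\<close>, i.e. the continued-fraction relation.\<close>
lemma cauchy_transform_relation:
  fixes M N :: "real measure"
  assumes PM: "prob_space M" "sets M = sets borel" "AE x in M. \<bar>x\<bar> \<le> R"
    and PN: "prob_space N" "sets N = sets borel" "AE x in N. \<bar>x\<bar> \<le> R"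
    and identity: "\<And>f. (\<integral>x. (x - c) * poly f x \<partial>M) = \<gamma> * (\<integral>y. poly (Lop M f) y \<partial>N)"
    and z: "Im z \<noteq> 0"
  shows "cauchy_transform M z
    = 1 / (z - of_real c - of_real \<gamma> * cauchy_transform N z)"
proof -
  obtain f g C where
    F_bound: "\<And>n x. \<bar>x\<bar> \<le> R \<Longrightarrow> cmod (of_real (poly (f n) x) + \<i> * of_real (poly (g n) x)) \<le> C"
    and F_lim: "\<And>x. \<bar>x\<bar> \<le> R \<Longrightarrow>
      (\<lambda>n. of_real (poly (f n) x) + \<i> * of_real (poly (g n) x)) \<longlonglongrightarrow> 1 / (z - of_real x)"
    and D_bound: "\<And>n s t. \<bar>s\<bar> \<le> R \<Longrightarrow> \<bar>t\<bar> \<le> R \<Longrightarrow>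
      cmod (of_real (divdiff (f n) s t) + \<i> * of_real (divdiff (g n) s t)) \<le> C"
    and D_lim: "\<And>s t. \<bar>s\<bar> \<le> R \<Longrightarrow> \<bar>t\<bar> \<le> R \<Longrightarrow>
      (\<lambda>n. of_real (divdiff (f n) s t) + \<i> * of_real (divdiff (g n) s t))
        \<longlonglongrightarrow> 1 / ((z - of_real s) * (z - of_real t))"
    using cauchy_kernel_approximation[OF z] by blast
  define F where "F n x = of_real (poly (f n) x) + \<i> * of_real (poly (g n) x)" for n x
  define D where "D n s t = of_real (divdiff (f n) s t) + \<i> * of_real (divdiff (g n) s t)" for n s t
  define Y where "Y n s = (\<integral>t. D n s t \<partial>M)" for n s
  define GM GN where "GM = cauchy_transform M z" "GN = cauchy_transform N z"
  have fin: "finite_measure M" "finite_measure N"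
    using PM(1) PN(1) by (simp_all add: prob_space.finite_measure)
  have kernel_continuous: "continuous_on UNIV (\<lambda>x. 1 / (z - of_real x))"
    by (intro continuous_intros) (use nonreal_diff_nonzero[OF z] in auto)
  have D_continuous: "continuous_on UNIV (D n s)" for n s
    unfolding D_def by (intro continuous_intros continuous_divdiff[THEN continuous_on_compose2]) auto
  have int_poly: "integrable M (\<lambda>x. (x - c) * poly h x)" "integrable N (poly h)" for h
    by (rule continuous_integrable[OF fin(1) PM(2,3)] continuous_integrable[OF fin(2) PN(2,3)];
        intro continuous_intros)+
  have int_divdiff: "integrable M (\<lambda>t. divdiff h s t)" for h s
    by (rule continuous_integrable[OF fin(1) PM(2,3) continuous_divdiff])
  have Y_poly: "Y n s = of_real (poly (Lop M (f n)) s) + \<i> * of_real (poly (Lop M (g n)) s)" for n s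
    unfolding Y_def D_def poly_Lop_integral[OF fin(1) PM(2,3)] using int_divdiff by simp
  have approx_identity: "(\<integral>x. of_real (x - c) * F n x \<partial>M) = of_real \<gamma> * (\<integral>s. Y n s \<partial>N)" for n
  proof -
    have "(\<lambda>x. of_real (x - c) * F n x)
        = (\<lambda>x. of_real ((x - c) * poly (f n) x) + \<i> * of_real ((x - c) * poly (g n) x))"
      unfolding F_def by (rule ext) (simp add: algebra_simps)
    then have "(\<integral>x. of_real (x - c) * F n x \<partial>M) = of_real (\<integral>x. (x - c) * poly (f n) x \<partial>M)
        + \<i> * of_real (\<integral>x. (x - c) * poly (g n) x \<partial>M)"
      using integral_real_imag[OF int_poly(1) int_poly(1)] by simp
    also have "\<dots> = of_real \<gamma> * (of_real (\<integral>s. poly (Lop M (f n)) s \<partial>N)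
        + \<i> * of_real (\<integral>s. poly (Lop M (g n)) s \<partial>N))"
      by (simp only: identity of_real_mult) (simp add: algebra_simps)
    also have "\<dots> = of_real \<gamma> * (\<integral>s. Y n s \<partial>N)"
      unfolding Y_poly using int_poly by simp
    finally show ?thesis .
  qed
  have lhs_lim: "(\<lambda>n. \<integral>x. of_real (x - c) * F n x \<partial>M)
      \<longlonglongrightarrow> (\<integral>x. of_real (x - c) * (1 / (z - of_real x)) \<partial>M)"
  proof (rule bounded_convergence_integral[OF fin(1) PM(3), where C="(R + \<bar>c\<bar>) * C"])
    show "(\<lambda>x. of_real (x - c) * (1 / (z - of_real x))) \<in> borel_measurable M"
      by (rule continuous_borel_measurable[OF PM(2)]) (intro continuous_intros kernel_continuous)
    show "(\<lambda>x. of_real (x - c) * F n x) \<in> borel_measurable M" for n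
      unfolding F_def by (rule continuous_borel_measurable[OF PM(2)]) (intro continuous_intros)
    show "norm (of_real (x - c) * F n x) \<le> (R + \<bar>c\<bar>) * C" if x: "\<bar>x\<bar> \<le> R" for n x
      unfolding norm_mult norm_of_real F_def
      using F_bound[OF x, of n] x by (intro mult_mono) auto
    show "(\<lambda>n. of_real (x - c) * F n x) \<longlonglongrightarrow> of_real (x - c) * (1 / (z - of_real x))"
      if "\<bar>x\<bar> \<le> R" for x
      unfolding F_def by (intro tendsto_mult tendsto_const F_lim[OF that])
  qed
  have Y_lim: "(\<lambda>n. Y n s) \<longlonglongrightarrow> 1 / (z - of_real s) * GM" if s: "\<bar>s\<bar> \<le> R" for s
  proof -
    have "(\<lambda>n. Y n s) \<longlonglongrightarrow> (\<integral>t. 1 / (z - of_real s) * (1 / (z - of_real t)) \<partial>M)"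
      unfolding Y_def
    proof (rule bounded_convergence_integral[OF fin(1) PM(3), where C=C])
      show "(\<lambda>t. 1 / (z - of_real s) * (1 / (z - of_real t))) \<in> borel_measurable M"
        by (rule continuous_borel_measurable[OF PM(2)]) (intro continuous_intros kernel_continuous)
      show "D n s \<in> borel_measurable M" for n
        by (rule continuous_borel_measurable[OF PM(2) D_continuous])
      show "norm (D n s t) \<le> C" if "\<bar>t\<bar> \<le> R" for n t
        unfolding D_def by (rule D_bound[OF s that])
      show "(\<lambda>n. D n s t) \<longlonglongrightarrow> 1 / (z - of_real s) * (1 / (z - of_real t))" if "\<bar>t\<bar> \<le> R" for t
        using D_lim[OF s that] unfolding D_def by simp
    qed
    then show ?thesis
      unfolding GM_GN_def cauchy_transform_def by (simp only: integral_mult_right_zero)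
  qed
  have Y_bound: "norm (Y n s) \<le> C" if s: "\<bar>s\<bar> \<le> R" for n s
    unfolding Y_def
  proof (rule norm_integral_le_bound[OF PM(1)])
    show "AE t in M. cmod (D n s t) \<le> C"
      using PM(3) unfolding D_def by eventually_elim (rule D_bound[OF s])
    show "integrable M (D n s)"
      by (rule continuous_integrable[OF fin(1) PM(2,3) D_continuous])
  qed
  have rhs_lim: "(\<lambda>n. \<integral>s. Y n s \<partial>N) \<longlonglongrightarrow> (\<integral>s. 1 / (z - of_real s) * GM \<partial>N)"
  proof (rule bounded_convergence_integral[OF fin(2) PN(3), where C=C])
    show "(\<lambda>s. 1 / (z - of_real s) * GM) \<in> borel_measurable N"
      by (rule continuous_borel_measurable[OF PN(2)]) (intro continuous_intros kernel_continuous)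
    show "Y n \<in> borel_measurable N" for n
      unfolding Y_poly[abs_def] by (rule continuous_borel_measurable[OF PN(2)]) (intro continuous_intros)
  qed (use Y_bound Y_lim in auto)
  have "(\<integral>s. 1 / (z - of_real s) * GM \<partial>N) = GN * GM"
    unfolding GM_GN_def cauchy_transform_def by (rule integral_mult_left_zero)
  then have "(\<lambda>n. \<integral>x. of_real (x - c) * F n x \<partial>M) \<longlonglongrightarrow> of_real \<gamma> * (GM * GN)"
    using tendsto_mult[OF tendsto_const rhs_lim, of "of_real \<gamma>"] unfolding approx_identity
    by (simp add: mult.commute)
  with lhs_lim have limit: "(\<integral>x. of_real (x - c) * (1 / (z - of_real x)) \<partial>M) = of_real \<gamma> * (GM * GN)"
    using LIMSEQ_unique by blast
  have pointwise: "of_real (x - c) * (1 / (z - of_real x)) = (z - of_real c) * (1 / (z - of_real x)) - 1"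
    for x using nonreal_diff_nonzero[OF z, of x] by (simp add: field_simps)
  have integrable_kernel: "integrable M (\<lambda>x. (z - of_real c) * (1 / (z - of_real x)))"
    by (intro integrable_mult_right continuous_integrable[OF fin(1) PM(2,3) kernel_continuous])
  have "(\<integral>x. of_real (x - c) * (1 / (z - of_real x)) \<partial>M)
      = (\<integral>x. (z - of_real c) * (1 / (z - of_real x)) \<partial>M) - (\<integral>x. 1 \<partial>M)"
    unfolding pointwise
    by (rule Bochner_Integration.integral_diff[OF integrable_kernel finite_measure.integrable_const[OF fin(1)]])
  also have "\<dots> = (z - of_real c) * GM - 1"
    unfolding integral_mult_right_zero GM_GN_def cauchy_transform_def
    using prob_space.prob_space[OF PM(1)] by simp
  finally have "(\<integral>x. of_real (x - c) * (1 / (z - of_real x)) \<partial>M) = (z - of_real c) * GM - 1" .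
  then have "GM * (z - of_real c - of_real \<gamma> * GN) = 1"
    using limit by (simp add: algebra_simps)
  then show ?thesis
    unfolding GM_GN_def by (metis nonzero_eq_divide_eq mult.commute mult_zero_left zero_neq_one)
qed

theorem proposition4p6:
  fixes M N :: "real measure" and p q :: "real poly" and P :: "nat \<Rightarrow> real poly"
  assumes "prob_space M" "sets M = sets borel" "compactly_supported M"
    and "prob_space N" "sets N = sets borel" "compactly_supported N"
    and "\<forall>a. M \<noteq> return borel a"
    and "p \<noteq> 0 \<or> q \<noteq> 0"
    and "\<forall>n. P n \<noteq> 0 \<and> degree (P n) = n"
    and "\<forall>n. \<exists>c::real. p * Lop N (Lop M (P n)) + q * Lop M (P n) = smult c (P n)"
    and "\<forall>n m. n \<noteq> m \<longrightarrow> (\<integral>x. poly (P n) x * poly (P m) x \<partial>M) = 0"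
  shows "\<exists>\<beta> \<gamma>. \<gamma> > 0 \<and> is_Phi \<beta> \<gamma> N M"
proof -
  obtain RM RN where "AE x in M. \<bar>x\<bar> \<le> RM" "AE x in N. \<bar>x\<bar> \<le> RN"
    using compactly_supported_AE_bounded assms(3,6) by metis
  then have RM: "AE x in M. \<bar>x\<bar> \<le> max RM RN" and RN: "AE x in N. \<bar>x\<bar> \<le> max RM RN"
    by (auto elim: AE_mp)
  define \<beta> \<gamma> where "\<beta> = moment M 1" "\<gamma> = moment M 2 - moment M 1 ^ 2"
  have "\<gamma> > 0"
    unfolding \<beta>_\<gamma>_def by (rule variance_pos[OF assms(1,2) RM assms(7)])
  moreover have "is_Phi \<beta> \<gamma> N M"
    unfolding is_Phi_def \<beta>_\<gamma>_def
    by (intro allI impI cauchy_transform_relation[OF assms(1,2) RM assms(4,5) RN]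
        moment_identity[OF assms(1,2) RM assms(4,5) RN assms(7-11)])
  ultimately show ?thesis by blast
qed

end
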